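(* For a graph $G$, $\gamma_{(2,2,2)}(G)=4$ if and only if at least one of the following holds: (i) $\gamma_{\times2,t}(G)=4$; (ii) $\gamma_t(G)=2$ and $G$ has minimum degree $\delta=1$; (iii) $\gamma_t(G)=2$ and $\gamma_{\times2,t}(G)\ge4$.
   Context: All graphs are finite and simple; $N(v)$ is the open neighbourhood. $\gamma_{(2,2,2)}(G)$ is the minimum of $\sum_v f(v)$ over functions $f:V(G)\to\{0,1,2\}$ with $\sum_{u\in N(v)}f(u)\ge2$ for every vertex $v$ (defined when $G$ has no isolated vertex). $\gamma_t(G)$ is the total domination number (minimum size of $S$ such that every vertex has a neighbour in $S$). $\gamma_{\times2,t}(G)$ is the minimum size of $S\subseteq V(G)$ such that every vertex has at least two neighbours in $S$ (defined when $G$ has minimum degree at least $2$). *)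

theory Defs
  imports Main "HOL-Library.Extended_Nat"
begin

definition simple_graph :: "'a set \<Rightarrow> ('a \<Rightarrow> 'a \<Rightarrow> bool) \<Rightarrow> bool" where
  "simple_graph V E \<longleftrightarrow> finite V \<and> (\<forall>u v. E u v \<longrightarrow> u \<in> V \<and> v \<in> V)
     \<and> (\<forall>u v. E u v \<longrightarrow> E v u) \<and> (\<forall>v. \<not> E v v)"

definition nbhd :: "'a set \<Rightarrow> ('a \<Rightarrow> 'a \<Rightarrow> bool) \<Rightarrow> 'a \<Rightarrow> 'a set" where
  "nbhd V E v = {u \<in> V. E v u}"

definition min_degree :: "'a set \<Rightarrow> ('a \<Rightarrow> 'a \<Rightarrow> bool) \<Rightarrow> nat" where
  "min_degree V E = Min ((\<lambda>v. card (nbhd V E v)) ` V)"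

text \<open>All parameters take value \<infinity> when no feasible object exists
(i.e. when the parameter is undefined).\<close>

definition gamma_222 :: "'a set \<Rightarrow> ('a \<Rightarrow> 'a \<Rightarrow> bool) \<Rightarrow> enat" where
  "gamma_222 V E = (INF f \<in> {f :: 'a \<Rightarrow> nat. (\<forall>v\<in>V. f v \<le> 2) \<and>
        (\<forall>v\<in>V. (\<Sum>u\<in>nbhd V E v. f u) \<ge> 2)}. enat (\<Sum>v\<in>V. f v))"

definition gamma_t :: "'a set \<Rightarrow> ('a \<Rightarrow> 'a \<Rightarrow> bool) \<Rightarrow> enat" where
  "gamma_t V E = (INF S \<in> {S. S \<subseteq> V \<and> (\<forall>v\<in>V. nbhd V E v \<inter> S \<noteq> {})}. enat (card S))"

definition gamma_x2t :: "'a set \<Rightarrow> ('a \<Rightarrow> 'a \<Rightarrow> bool) \<Rightarrow> enat" where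
  "gamma_x2t V E = (INF S \<in> {S. S \<subseteq> V \<and> (\<forall>v\<in>V. card (nbhd V E v \<inter> S) \<ge> 2)}. enat (card S))"

end

theory Submission
  imports Defs
begin

text \<open>A (2,2,2)-function of weight at most 3 takes only the values 0 and 1: a vertex of
value 2 and its neighbourhood, which misses the vertex and carries weight at least 2,
already have weight 4. A 0/1-valued (2,2,2)-function is the indicator of a double total
dominating set, so \<open>gamma_222 < 4\<close> forces \<open>gamma_x2t < 4\<close> and minimum degree at least 2,
ruling out (i)--(iii); conversely \<open>gamma_222 \<le> gamma_x2t\<close> and \<open>gamma_222 \<le> 2 * gamma_t\<close>
give \<open>gamma_222 \<le> 4\<close> under each of them. A (2,2,2)-function of weight 4 is either
0/1-valued, giving (i), or has a vertex u of value 2; then some neighbour w of u has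
positive value, all other vertices together carry weight at most 1, so {u, w} is a total
dominating set and (iii) holds.\<close>

definition dominating_222 :: "'a set \<Rightarrow> ('a \<Rightarrow> 'a \<Rightarrow> bool) \<Rightarrow> ('a \<Rightarrow> nat) \<Rightarrow> bool" where
  "dominating_222 V E f \<longleftrightarrow> (\<forall>v\<in>V. f v \<le> 2) \<and> (\<forall>v\<in>V. 2 \<le> (\<Sum>u\<in>nbhd V E v. f u))"

definition total_dominating :: "'a set \<Rightarrow> ('a \<Rightarrow> 'a \<Rightarrow> bool) \<Rightarrow> 'a set \<Rightarrow> bool" where
  "total_dominating V E S \<longleftrightarrow> S \<subseteq> V \<and> (\<forall>v\<in>V. nbhd V E v \<inter> S \<noteq> {})"

definition double_total_dominating :: "'a set \<Rightarrow> ('a \<Rightarrow> 'a \<Rightarrow> bool) \<Rightarrow> 'a set \<Rightarrow> bool" where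
  "double_total_dominating V E S \<longleftrightarrow> S \<subseteq> V \<and> (\<forall>v\<in>V. 2 \<le> card (nbhd V E v \<inter> S))"

lemma enat_INF_attained:
  assumes "(INF x\<in>A. enat (g x)) = enat k"
  obtains x where "x \<in> A" "g x = k"
proof -
  let ?B = "(\<lambda>x. enat (g x)) ` A"
  have "?B \<noteq> {}" using assms by (auto simp: Inf_enat_def)
  then have "Inf ?B \<in> ?B" unfolding Inf_enat_def by (auto intro: LeastI)
  then show ?thesis using assms that by auto
qed

lemma gamma_222_le: "dominating_222 V E f \<Longrightarrow> gamma_222 V E \<le> enat (sum f V)"
  unfolding gamma_222_def dominating_222_def by (rule INF_lower) auto

lemma gamma_222_attained:
  assumes "gamma_222 V E = enat k"
  obtains f where "dominating_222 V E f" "sum f V = k"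
  using assms unfolding gamma_222_def dominating_222_def
  by (auto elim: enat_INF_attained)

lemma gamma_t_le: "total_dominating V E S \<Longrightarrow> gamma_t V E \<le> enat (card S)"
  unfolding gamma_t_def total_dominating_def by (rule INF_lower) auto

lemma gamma_t_attained:
  assumes "gamma_t V E = enat k"
  obtains S where "total_dominating V E S" "card S = k"
  using assms unfolding gamma_t_def total_dominating_def
  by (auto elim: enat_INF_attained)

lemma gamma_x2t_le: "double_total_dominating V E S \<Longrightarrow> gamma_x2t V E \<le> enat (card S)"
  unfolding gamma_x2t_def double_total_dominating_def by (rule INF_lower) auto

lemma simple_graph_nbhd:
  assumes "simple_graph V E"
  shows "finite V" "finite (nbhd V E v)" "v \<notin> nbhd V E v"
  using assms unfolding simple_graph_def nbhd_def by auto

lemma sum_indicator_nbhd: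
  "simple_graph V E \<Longrightarrow> (\<Sum>u\<in>nbhd V E v. of_bool (u \<in> S)) = card (nbhd V E v \<inter> S)"
  by (simp add: simple_graph_nbhd(2))

lemma gamma_222_le_gamma_x2t:
  assumes "simple_graph V E"
  shows "gamma_222 V E \<le> gamma_x2t V E"
  unfolding gamma_x2t_def
proof (rule INF_greatest)
  fix S assume "S \<in> {S. S \<subseteq> V \<and> (\<forall>v\<in>V. 2 \<le> card (nbhd V E v \<inter> S))}"
  then have S: "S \<subseteq> V" "\<forall>v\<in>V. 2 \<le> card (nbhd V E v \<inter> S)" by auto
  let ?f = "\<lambda>v. of_bool (v \<in> S) :: nat"
  have "dominating_222 V E ?f"
    using S(2) sum_indicator_nbhd[OF assms] unfolding dominating_222_def by auto
  moreover have "sum ?f V = card S"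
    using S(1) simple_graph_nbhd(1)[OF assms] by (simp add: Int_absorb1)
  ultimately show "gamma_222 V E \<le> enat (card S)" by (metis gamma_222_le)
qed

lemma gamma_222_le_twice_gamma_t:
  assumes "simple_graph V E"
  shows "gamma_222 V E \<le> 2 * gamma_t V E"
proof (cases "gamma_t V E")
  case (enat k)
  then obtain S where S: "total_dominating V E S" "card S = k" by (rule gamma_t_attained)
  let ?f = "\<lambda>v. 2 * of_bool (v \<in> S) :: nat"
  have "2 \<le> (\<Sum>u\<in>nbhd V E v. ?f u)" if "v \<in> V" for v
  proof -
    have "nbhd V E v \<inter> S \<noteq> {}" using S(1) that unfolding total_dominating_def by auto
    then have "0 < card (nbhd V E v \<inter> S)" using simple_graph_nbhd(2)[OF assms] by auto
    then show ?thesis by (simp add: sum_distrib_left[symmetric] sum_indicator_nbhd[OF assms])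
  qed
  then have "dominating_222 V E ?f" unfolding dominating_222_def by auto
  moreover have "sum ?f V = 2 * card S"
    using S(1) simple_graph_nbhd(1)[OF assms] unfolding total_dominating_def
    by (simp add: sum_distrib_left[symmetric] Int_absorb1)
  ultimately have "gamma_222 V E \<le> enat (2 * card S)" by (metis gamma_222_le)
  then show ?thesis using enat S(2) by (simp add: numeral_eq_enat)
qed (simp add: numeral_eq_enat)

lemma gamma_t_empty: "gamma_t {} E = 0"
  using gamma_t_le[of "{}" E "{}"] by (simp add: total_dominating_def enat_0)

lemma gamma_t_ge_2:
  assumes "simple_graph V E" and "V \<noteq> {}"
  shows "2 \<le> gamma_t V E"
  unfolding gamma_t_def
proof (rule INF_greatest)
  fix S assume S: "S \<in> {S. S \<subseteq> V \<and> (\<forall>v\<in>V. nbhd V E v \<inter> S \<noteq> {})}"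
  obtain v where "v \<in> V" using assms(2) by auto
  then obtain u where u: "u \<in> nbhd V E v \<inter> S" using S by auto
  then have "u \<in> V" unfolding nbhd_def by auto
  then obtain w where w: "w \<in> nbhd V E u \<inter> S" using S by auto
  have "u \<noteq> w" using w simple_graph_nbhd(3)[OF assms(1)] by auto
  then have "card {u, w} = 2" by simp
  moreover have "{u, w} \<subseteq> S" using u w by auto
  moreover have "finite S" using S simple_graph_nbhd(1)[OF assms(1)] finite_subset by auto
  ultimately have "2 \<le> card S" by (metis card_mono)
  then show "2 \<le> enat (card S)" by (simp add: numeral_eq_enat)
qed

lemma nbhd_subset_remove: "simple_graph V E \<Longrightarrow> nbhd V E v \<subseteq> V - {v}"
  using simple_graph_nbhd(3) unfolding nbhd_def by fastforce

lemma dominating_222_weight_ge_4: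
  assumes G: "simple_graph V E" and f: "dominating_222 V E f" and u: "u \<in> V" "f u = 2"
  shows "4 \<le> sum f V"
proof -
  have "2 \<le> sum f (nbhd V E u)" using f u(1) unfolding dominating_222_def by auto
  also have "\<dots> \<le> sum f (V - {u})"
    using nbhd_subset_remove[OF G] simple_graph_nbhd(1)[OF G] by (intro sum_mono2) auto
  finally show ?thesis using sum.remove[OF simple_graph_nbhd(1)[OF G] u(1), of f] u(2) by linarith
qed

lemma dominating_222_01_double_total:
  assumes G: "simple_graph V E" and f: "dominating_222 V E f" and le1: "\<forall>v\<in>V. f v \<le> 1"
  defines "S \<equiv> {v\<in>V. f v = 1}"
  shows "double_total_dominating V E S" "card S = sum f V"
proof -
  have count: "sum f A = card (A \<inter> S)" if "A \<subseteq> V" "finite A" for A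
  proof -
    have "sum f A = (\<Sum>v\<in>A. of_bool (v \<in> S))"
      using that(1) le1 unfolding S_def by (intro sum.cong) (auto simp: le_Suc_eq)
    then show ?thesis using that(2) by simp
  qed
  show "double_total_dominating V E S"
    using f count[OF _ simple_graph_nbhd(2)[OF G]]
    unfolding double_total_dominating_def dominating_222_def S_def nbhd_def by auto
  show "card S = sum f V"
    using count[OF _ simple_graph_nbhd(1)[OF G]] unfolding S_def by (simp add: Int_absorb1)
qed

lemma gamma_t_le_2_if_weight_4:
  assumes G: "simple_graph V E" and f: "dominating_222 V E f" and "sum f V = 4"
    and u: "u \<in> V" "f u = 2"
  shows "gamma_t V E \<le> 2"
proof -
  have fV: "finite V" using simple_graph_nbhd(1)[OF G] .
  have "2 \<le> sum f (nbhd V E u)" using f u(1) unfolding dominating_222_def by auto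
  then obtain w where w: "w \<in> nbhd V E u" "0 < f w" by (metis not_gr0 sum.neutral zero_less_numeral leD)
  then have "w \<in> V - {u}" using nbhd_subset_remove[OF G] by auto
  then have rest: "sum f (V - {u} - {w}) \<le> 1"
    using sum.remove[OF fV u(1), of f] sum.remove[of "V - {u}" w f] fV w(2) u(2) \<open>sum f V = 4\<close>
    by auto
  have "total_dominating V E {u, w}"
    unfolding total_dominating_def
  proof (intro conjI ballI)
    fix v assume "v \<in> V"
    show "nbhd V E v \<inter> {u, w} \<noteq> {}"
    proof
      assume "nbhd V E v \<inter> {u, w} = {}"
      then have "sum f (nbhd V E v) \<le> sum f (V - {u} - {w})"
        using fV unfolding nbhd_def by (intro sum_mono2) auto
      moreover have "2 \<le> sum f (nbhd V E v)" using f \<open>v \<in> V\<close> unfolding dominating_222_def by auto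
      ultimately show False using rest by linarith
    qed
  qed (use u(1) \<open>w \<in> V - {u}\<close> in auto)
  then have "gamma_t V E \<le> enat (card {u, w})" by (rule gamma_t_le)
  moreover have "card {u, w} = 2" using \<open>w \<in> V - {u}\<close> by auto
  ultimately show ?thesis by (simp add: numeral_eq_enat)
qed

lemma dominating_222_weight_4_cases:
  assumes G: "simple_graph V E" and f: "dominating_222 V E f" "sum f V = 4"
  shows "gamma_x2t V E \<le> 4 \<or> gamma_t V E = 2"
proof (cases "\<exists>u\<in>V. f u = 2")
  case True
  then obtain u where "u \<in> V" "f u = 2" by blast
  then have "gamma_t V E = 2"
    using gamma_t_le_2_if_weight_4[OF G f] gamma_t_ge_2[OF G] by fastforce
  then show ?thesis ..
next
  case False
  then have "\<forall>v\<in>V. f v \<le> 1" using f(1) unfolding dominating_222_def by force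
  then have "gamma_x2t V E \<le> 4"
    using dominating_222_01_double_total[OF G f(1)] gamma_x2t_le f(2) by (metis numeral_eq_enat)
  then show ?thesis ..
qed

lemma gamma_222_lt_4_double_total:
  assumes G: "simple_graph V E" and "gamma_222 V E < 4"
  obtains S where "double_total_dominating V E S" "card S < 4"
proof -
  obtain k where "gamma_222 V E = enat k" "k < 4"
    using assms(2) by (cases "gamma_222 V E") (auto simp: numeral_eq_enat)
  then obtain f where f: "dominating_222 V E f" "sum f V < 4"
    by (metis gamma_222_attained)
  have "f v \<noteq> 2" if "v \<in> V" for v
    using that dominating_222_weight_ge_4[OF G f(1)] f(2) by fastforce
  then have "\<forall>v\<in>V. f v \<le> 1" using f(1) unfolding dominating_222_def by fastforce
  then show ?thesis using dominating_222_01_double_total[OF G f(1)] f(2) that by metis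
qed

lemma min_degree_ge_2_if_double_total:
  assumes G: "simple_graph V E" and "V \<noteq> {}" and S: "double_total_dominating V E S"
  shows "2 \<le> min_degree V E"
proof -
  have "2 \<le> card (nbhd V E v)" if "v \<in> V" for v
    using S that card_mono[OF simple_graph_nbhd(2)[OF G], of "nbhd V E v \<inter> S"]
    unfolding double_total_dominating_def by fastforce
  then show ?thesis
    unfolding min_degree_def using simple_graph_nbhd(1)[OF G] \<open>V \<noteq> {}\<close> by simp
qed

theorem theorem18:
  fixes V :: "'a set" and E :: "'a \<Rightarrow> 'a \<Rightarrow> bool"
  assumes "simple_graph V E"
  shows "gamma_222 V E = 4 \<longleftrightarrow>
           (gamma_x2t V E = 4
            \<or> (gamma_t V E = 2 \<and> min_degree V E = 1)
            \<or> (gamma_t V E = 2 \<and> gamma_x2t V E \<ge> 4))"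
proof
  assume g4: "gamma_222 V E = 4"
  then obtain f where "dominating_222 V E f" "sum f V = 4"
    by (metis gamma_222_attained numeral_eq_enat)
  then have "gamma_x2t V E \<le> 4 \<or> gamma_t V E = 2"
    by (rule dominating_222_weight_4_cases[OF assms])
  moreover have "4 \<le> gamma_x2t V E" using gamma_222_le_gamma_x2t[OF assms] g4 by simp
  ultimately show "gamma_x2t V E = 4 \<or> (gamma_t V E = 2 \<and> min_degree V E = 1)
        \<or> (gamma_t V E = 2 \<and> gamma_x2t V E \<ge> 4)" by auto
next
  assume rhs: "gamma_x2t V E = 4 \<or> (gamma_t V E = 2 \<and> min_degree V E = 1)
                 \<or> (gamma_t V E = 2 \<and> gamma_x2t V E \<ge> 4)"
  have "gamma_222 V E \<le> 4"
    using rhs gamma_222_le_gamma_x2t[OF assms] gamma_222_le_twice_gamma_t[OF assms] by auto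
  moreover have "\<not> gamma_222 V E < 4"
  proof
    assume "gamma_222 V E < 4"
    then obtain S where S: "double_total_dominating V E S" "card S < 4"
      by (rule gamma_222_lt_4_double_total[OF assms])
    then have "gamma_x2t V E < 4"
      using gamma_x2t_le[OF S(1)] by (metis enat_ord_simps(2) numeral_eq_enat order.strict_trans1)
    then have "gamma_t V E = 2" "min_degree V E = 1" using rhs by auto
    moreover have "V \<noteq> {}" using \<open>gamma_t V E = 2\<close> gamma_t_empty[of E] by auto
    ultimately show False using min_degree_ge_2_if_double_total[OF assms _ S(1)] by simp
  qed
  ultimately show "gamma_222 V E = 4" by simp
qed

end
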